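(* If a vertical line $\Gamma$ sweeps from left to right, the only values of $x(\Gamma)$ at which the shadow of $\mathrm{OPT}$ at $\Gamma$ changes are $x$-coordinates of reflection points of $\mathrm{OPT}$. In particular, any subpath of $\mathrm{OPT}$ that does not contain a reflection point (as an interior point) has shadow $1$ throughout its length.
   Context: Instance: vertical line segments $s_1,\dots,s_n$ in $\mathbb{R}^2$, each of length $1$, with pairwise distinct $x$-coordinates. A tour is a cyclic sequence of points $p_1,\dots,p_\sigma$, each on some segment, with every segment containing at least one $p_j$; the straight segments joining consecutive points are legs. $\mathrm{OPT}$ is a fixed minimum-cost tour, oriented $p_1\to p_2\to\cdots$, with no two consecutive points on the same segment (no vertical legs) and not self-crossing. For a point $p_j$ of $\mathrm{OPT}$ on segment $s$, $p_j$ is a reflection point if both of its incident legs lie in the half-plane $x\le x(s)$ or both lie in $x\ge x(s)$. Shadow: for a collection of legs and $x_0$, the shadow at $x_0$ is the number of legs intersecting the vertical line $x=x_0$; the shadow of a path over a range is the maximum of this over the range. *)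

theory Defs
  imports "HOL-Analysis.Analysis"
begin

type_synonym point = "real \<times> real"

definition vseg :: "(nat \<Rightarrow> real) \<Rightarrow> (nat \<Rightarrow> real) \<Rightarrow> nat \<Rightarrow> point set" where
  "vseg xs ys i = {(xs i, y) | y. ys i \<le> y \<and> y \<le> ys i + 1}"

definition nxt :: "nat \<Rightarrow> nat \<Rightarrow> nat" where
  "nxt \<sigma> j = Suc j mod \<sigma>"

definition prv :: "nat \<Rightarrow> nat \<Rightarrow> nat" where
  "prv \<sigma> j = (j + \<sigma> - 1) mod \<sigma>"

definition is_tour :: "nat \<Rightarrow> (nat \<Rightarrow> real) \<Rightarrow> (nat \<Rightarrow> real) \<Rightarrow> nat \<Rightarrow> (nat \<Rightarrow> point) \<Rightarrow> bool" where
  "is_tour n xs ys \<sigma> p \<longleftrightarrow> 1 \<le> \<sigma> \<and>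
     (\<forall>j<\<sigma>. \<exists>i<n. p j \<in> vseg xs ys i) \<and>
     (\<forall>i<n. \<exists>j<\<sigma>. p j \<in> vseg xs ys i)"

definition tour_cost :: "nat \<Rightarrow> (nat \<Rightarrow> point) \<Rightarrow> real" where
  "tour_cost \<sigma> p = (\<Sum>j<\<sigma>. dist (p j) (p (nxt \<sigma> j)))"

definition is_opt_tour :: "nat \<Rightarrow> (nat \<Rightarrow> real) \<Rightarrow> (nat \<Rightarrow> real) \<Rightarrow> nat \<Rightarrow> (nat \<Rightarrow> point) \<Rightarrow> bool" where
  "is_opt_tour n xs ys \<sigma> p \<longleftrightarrow> is_tour n xs ys \<sigma> p \<and>
     (\<forall>\<sigma>' p'. is_tour n xs ys \<sigma>' p' \<longrightarrow> tour_cost \<sigma> p \<le> tour_cost \<sigma>' p')"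

definition no_vertical_legs :: "nat \<Rightarrow> (nat \<Rightarrow> real) \<Rightarrow> (nat \<Rightarrow> real) \<Rightarrow> nat \<Rightarrow> (nat \<Rightarrow> point) \<Rightarrow> bool" where
  "no_vertical_legs n xs ys \<sigma> p \<longleftrightarrow>
     (\<forall>j<\<sigma>. \<not> (\<exists>i<n. p j \<in> vseg xs ys i \<and> p (nxt \<sigma> j) \<in> vseg xs ys i))"

definition legs_cross :: "point \<Rightarrow> point \<Rightarrow> point \<Rightarrow> point \<Rightarrow> bool" where
  "legs_cross a b c d \<longleftrightarrow> open_segment a b \<inter> open_segment c d \<noteq> {} \<and> \<not> collinear {a, b, c, d}"

definition not_self_crossing :: "nat \<Rightarrow> (nat \<Rightarrow> point) \<Rightarrow> bool" where
  "not_self_crossing \<sigma> p \<longleftrightarrow>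
     (\<forall>i<\<sigma>. \<forall>j<\<sigma>. i \<noteq> j \<longrightarrow> \<not> legs_cross (p i) (p (nxt \<sigma> i)) (p j) (p (nxt \<sigma> j)))"

definition reflection_point :: "nat \<Rightarrow> (nat \<Rightarrow> point) \<Rightarrow> nat \<Rightarrow> bool" where
  "reflection_point \<sigma> p j \<longleftrightarrow>
     (fst (p (prv \<sigma> j)) \<le> fst (p j) \<and> fst (p (nxt \<sigma> j)) \<le> fst (p j)) \<or>
     (fst (p (prv \<sigma> j)) \<ge> fst (p j) \<and> fst (p (nxt \<sigma> j)) \<ge> fst (p j))"

definition leg_meets :: "nat \<Rightarrow> (nat \<Rightarrow> point) \<Rightarrow> nat \<Rightarrow> real \<Rightarrow> bool" where
  "leg_meets \<sigma> p j x0 \<longleftrightarrow> closed_segment (p j) (p (nxt \<sigma> j)) \<inter> {z. fst z = x0} \<noteq> {}"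

definition shadow :: "nat \<Rightarrow> (nat \<Rightarrow> point) \<Rightarrow> nat set \<Rightarrow> real \<Rightarrow> nat" where
  "shadow \<sigma> p J x0 = card {j \<in> J. leg_meets \<sigma> p j x0}"

end

theory Submission
  imports Defs
begin

text \<open>Only the x-coordinates X j of the tour points matter. If no tour point lies on the
line x = x0, a leg meets the line iff its endpoints lie on opposite sides of it. Moving the line
from x0 to x1 changes the crossing indicator of a leg by sgn (X b - X a) for each endpoint a lying
strictly between x0 and x1, where b is the other endpoint. Summed over the cyclic tour, a point m in
this window thus contributes sgn (X (prv m) - X m) + sgn (X (nxt m) - X m), which is 0 unless m is a
reflection point.

Along a subpath without interior reflection points the x-coordinates are monotone, so two distinct
legs of it can only share x-values at interior points of the subpath; a vertical line avoiding
these points meets at most one leg.\<close>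

lemma nxt_less: "0 < \<sigma> \<Longrightarrow> nxt \<sigma> j < \<sigma>"
  by (simp add: nxt_def)

lemma prv_less: "0 < \<sigma> \<Longrightarrow> prv \<sigma> j < \<sigma>"
  by (simp add: prv_def)

lemma prv_nxt: "j < \<sigma> \<Longrightarrow> prv \<sigma> (nxt \<sigma> j) = j"
  unfolding prv_def nxt_def using mod_if by fastforce

lemma nxt_prv: "j < \<sigma> \<Longrightarrow> nxt \<sigma> (prv \<sigma> j) = j"
  unfolding prv_def nxt_def by (cases j) (auto simp: mod_Suc_eq)

lemma nxt_add_mod: "nxt \<sigma> ((s + t) mod \<sigma>) = (s + Suc t) mod \<sigma>"
  by (simp add: nxt_def mod_Suc_eq)

lemma prv_add_mod:
  assumes "0 < \<sigma>" "0 < t"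
  shows "prv \<sigma> ((s + t) mod \<sigma>) = (s + (t - 1)) mod \<sigma>"
  using nxt_add_mod[of \<sigma> s "t - 1"] prv_nxt[of "(s + (t - 1)) mod \<sigma>" \<sigma>] assms by simp

lemma leg_meets_iff:
  "leg_meets \<sigma> p j x \<longleftrightarrow> x \<in> closed_segment (fst (p j)) (fst (p (nxt \<sigma> j)))"
  using closed_segment_linear_image[OF linear_fst, of "p j" "p (nxt \<sigma> j)"]
  by (auto simp: leg_meets_def)

lemma leg_meets_iff_crosses:
  assumes "fst (p j) \<noteq> x" "fst (p (nxt \<sigma> j)) \<noteq> x"
  shows "leg_meets \<sigma> p j x \<longleftrightarrow> (fst (p j) < x) \<noteq> (fst (p (nxt \<sigma> j)) < x)"
  using assms by (auto simp: leg_meets_iff closed_segment_eq_real_ivl)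

lemma not_reflection_point_iff:
  "\<not> reflection_point \<sigma> p j \<longleftrightarrow>
     fst (p (prv \<sigma> j)) < fst (p j) \<and> fst (p j) < fst (p (nxt \<sigma> j)) \<or>
     fst (p (prv \<sigma> j)) > fst (p j) \<and> fst (p j) > fst (p (nxt \<sigma> j))"
  by (auto simp: reflection_point_def)

lemma crossing_change_of_leg:
  fixes a b x0 x1 :: real
  assumes "x0 < x1" "a \<notin> {x0, x1}" "b \<notin> {x0, x1}"
  shows "of_bool ((a < x1) \<noteq> (b < x1)) - of_bool ((a < x0) \<noteq> (b < x0))
       = of_bool (a \<in> {x0<..<x1}) * sgn (b - a) + of_bool (b \<in> {x0<..<x1}) * sgn (a - b)"
  using assms by (auto simp: sgn_if)

lemma cyclic_crossing_change:
  fixes X :: "nat \<Rightarrow> real"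
  assumes "0 < \<sigma>" "x0 < x1" and off_lines: "\<forall>j<\<sigma>. X j \<notin> {x0, x1}"
  shows "(\<Sum>j<\<sigma>. of_bool ((X j < x1) \<noteq> (X (nxt \<sigma> j) < x1))
                 - of_bool ((X j < x0) \<noteq> (X (nxt \<sigma> j) < x0)))
       = (\<Sum>j<\<sigma>. of_bool (X j \<in> {x0<..<x1})
                 * (sgn (X (prv \<sigma> j) - X j) + sgn (X (nxt \<sigma> j) - X j)))"
proof -
  let ?W = "{x0<..<x1}"
  \<comment> \<open>Charge the term of the endpoint nxt j of leg j to the point nxt j, whose predecessor is j.\<close>
  have "(\<Sum>j<\<sigma>. of_bool (X (nxt \<sigma> j) \<in> ?W) * sgn (X j - X (nxt \<sigma> j)))
      = (\<Sum>j<\<sigma>. of_bool (X j \<in> ?W) * sgn (X (prv \<sigma> j) - X j))"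
    by (rule sum.reindex_bij_witness[where i = "prv \<sigma>" and j = "nxt \<sigma>"])
       (auto simp: prv_nxt nxt_prv nxt_less prv_less \<open>0 < \<sigma>\<close>)
  moreover have "X j \<notin> {x0, x1}" "X (nxt \<sigma> j) \<notin> {x0, x1}" if "j < \<sigma>" for j
    using off_lines that nxt_less[OF \<open>0 < \<sigma>\<close>] by auto
  ultimately show ?thesis
    using crossing_change_of_leg[OF \<open>x0 < x1\<close>]
    by (simp add: sum.distrib algebra_simps)
qed

lemma card_crossings_eq_if_no_turn:
  fixes X :: "nat \<Rightarrow> real"
  assumes "0 < \<sigma>" "x0 < x1" "\<forall>j<\<sigma>. X j \<notin> {x0, x1}"
    and no_turn: "\<forall>j<\<sigma>. X j \<in> {x0<..<x1} \<longrightarrow>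
                    sgn (X (prv \<sigma> j) - X j) + sgn (X (nxt \<sigma> j) - X j) = 0"
  shows "card {j. j < \<sigma> \<and> (X j < x0) \<noteq> (X (nxt \<sigma> j) < x0)}
       = card {j. j < \<sigma> \<and> (X j < x1) \<noteq> (X (nxt \<sigma> j) < x1)}"
proof -
  have "(\<Sum>j<\<sigma>. of_bool ((X j < x1) \<noteq> (X (nxt \<sigma> j) < x1)) :: real)
      - (\<Sum>j<\<sigma>. of_bool ((X j < x0) \<noteq> (X (nxt \<sigma> j) < x0))) = 0"
    using cyclic_crossing_change[OF assms(1-3)] no_turn by (simp add: sum_subtractf)
  then show ?thesis
    by (simp add: sum_of_bool_eq Int_def lessThan_def)
qed

lemma shadow_eq_card_crossings:
  assumes "0 < \<sigma>" "\<forall>j<\<sigma>. fst (p j) \<noteq> x"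
  shows "shadow \<sigma> p {..<\<sigma>} x
       = card {j. j < \<sigma> \<and> (fst (p j) < x) \<noteq> (fst (p (nxt \<sigma> j)) < x)}"
  unfolding shadow_def using assms leg_meets_iff_crosses nxt_less
  by (intro arg_cong[where f = card]) auto

lemma no_turn_if_not_reflection_point:
  "\<not> reflection_point \<sigma> p j \<Longrightarrow>
     sgn (fst (p (prv \<sigma> j)) - fst (p j)) + sgn (fst (p (nxt \<sigma> j)) - fst (p j)) = 0"
  by (auto simp: not_reflection_point_iff sgn_if)

lemma shadow_constant_between_reflection_points:
  assumes "0 < \<sigma>" "x0 < x1"
    and "\<forall>j<\<sigma>. fst (p j) \<noteq> x0 \<and> fst (p j) \<noteq> x1"
    and "\<forall>j<\<sigma>. reflection_point \<sigma> p j \<longrightarrow> fst (p j) \<notin> {x0..x1}"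
  shows "shadow \<sigma> p {..<\<sigma>} x0 = shadow \<sigma> p {..<\<sigma>} x1"
proof -
  have "\<forall>j<\<sigma>. fst (p j) \<in> {x0<..<x1} \<longrightarrow>
          sgn (fst (p (prv \<sigma> j)) - fst (p j)) + sgn (fst (p (nxt \<sigma> j)) - fst (p j)) = 0"
    using assms(4) no_turn_if_not_reflection_point by fastforce
  then show ?thesis
    using assms(1-3) shadow_eq_card_crossings
      card_crossings_eq_if_no_turn[of \<sigma> x0 x1 "\<lambda>j. fst (p j)"]
    by simp
qed

lemma monotone_if_no_turn:
  fixes Y :: "nat \<Rightarrow> real"
  assumes "\<forall>t. 0 < t \<and> t < k \<longrightarrow>
             Y (t - 1) < Y t \<and> Y t < Y (Suc t) \<or> Y (t - 1) > Y t \<and> Y t > Y (Suc t)"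
  shows "(\<forall>t<k. Y t \<le> Y (Suc t)) \<or> (\<forall>t<k. Y (Suc t) \<le> Y t)"
  using assms
proof (induction k)
  case 0
  then show ?case by simp
next
  case (Suc k)
  then have IH: "(\<forall>t<k. Y t \<le> Y (Suc t)) \<or> (\<forall>t<k. Y (Suc t) \<le> Y t)"
    by simp
  show ?case
  proof (cases k)
    case 0
    then show ?thesis by auto
  next
    case (Suc k')
    then have "Y k' < Y k \<and> Y k < Y (Suc k) \<or> Y k' > Y k \<and> Y k > Y (Suc k)"
      using Suc.prems[rule_format, of k] by simp
    then show ?thesis
      using IH \<open>k = Suc k'\<close> by (auto simp: less_Suc_eq)
  qed
qed

lemma monotone_path_meets_line_once:
  fixes Y :: "nat \<Rightarrow> real"
  assumes mono: "\<forall>t<k. Y t \<le> Y (Suc t)" and off: "\<forall>t. 0 < t \<and> t < k \<longrightarrow> Y t \<noteq> x"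
    and "t1 < k" "t2 < k"
    and "x \<in> closed_segment (Y t1) (Y (Suc t1))" "x \<in> closed_segment (Y t2) (Y (Suc t2))"
  shows "t1 = t2"
proof -
  have chain: "Y i \<le> Y j" if "i \<le> j" "j \<le> k" for i j
    using that
  proof (induction j rule: dec_induct)
    case (step n)
    then show ?case
      using mono[rule_format, of n] by simp
  qed simp
  have False if "a < b" "b < k" "x \<in> closed_segment (Y a) (Y (Suc a))"
    "x \<in> closed_segment (Y b) (Y (Suc b))" for a b
  proof -
    have "x \<le> Y (Suc a)" "Y b \<le> x"
      using that mono by (auto simp: closed_segment_eq_real_ivl)
    moreover have "Y (Suc a) \<le> Y b"
      using chain that by simp
    ultimately have "Y (Suc a) = x" by simp
    then show False
      using off that by auto
  qed
  then show ?thesis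
    using assms(3-6) by (metis linorder_neqE_nat)
qed

lemma path_without_turns_meets_line_once:
  fixes Y :: "nat \<Rightarrow> real"
  assumes no_turn: "\<forall>t. 0 < t \<and> t < k \<longrightarrow>
             Y (t - 1) < Y t \<and> Y t < Y (Suc t) \<or> Y (t - 1) > Y t \<and> Y t > Y (Suc t)"
    and off: "\<forall>t. 0 < t \<and> t < k \<longrightarrow> Y t \<noteq> x"
    and "t1 < k" "t2 < k"
    and "x \<in> closed_segment (Y t1) (Y (Suc t1))" "x \<in> closed_segment (Y t2) (Y (Suc t2))"
  shows "t1 = t2"
  using monotone_if_no_turn[OF no_turn]
proof
  assume "\<forall>t<k. Y t \<le> Y (Suc t)"
  then show ?thesis
    using monotone_path_meets_line_once off assms(3-6) by blast
next
  assume "\<forall>t<k. Y (Suc t) \<le> Y t"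
  moreover have "- x \<in> closed_segment (- Y t) (- Y (Suc t))"
    if "x \<in> closed_segment (Y t) (Y (Suc t))" for t
    using that by (auto simp: closed_segment_eq_real_ivl split: if_splits)
  ultimately show ?thesis
    using monotone_path_meets_line_once[of k "\<lambda>t. - Y t" "- x"] off assms(3-6) by auto
qed

lemma shadow_of_subpath_without_reflection_points:
  assumes "0 < \<sigma>"
    and no_reflection: "\<forall>t. 0 < t \<and> t < k \<longrightarrow> \<not> reflection_point \<sigma> p ((s + t) mod \<sigma>)"
    and meets: "\<exists>t<k. leg_meets \<sigma> p ((s + t) mod \<sigma>) x0"
    and off: "\<forall>t. 0 < t \<and> t < k \<longrightarrow> fst (p ((s + t) mod \<sigma>)) \<noteq> x0"
  shows "shadow \<sigma> p {(s + t) mod \<sigma> | t. t < k} x0 = 1"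
proof -
  define Y where "Y t = fst (p ((s + t) mod \<sigma>))" for t
  have meets_iff:
    "leg_meets \<sigma> p ((s + t) mod \<sigma>) x0 \<longleftrightarrow> x0 \<in> closed_segment (Y t) (Y (Suc t))" for t
    by (simp add: leg_meets_iff nxt_add_mod Y_def)
  have "\<forall>t. 0 < t \<and> t < k \<longrightarrow>
          Y (t - 1) < Y t \<and> Y t < Y (Suc t) \<or> Y (t - 1) > Y t \<and> Y t > Y (Suc t)"
    using no_reflection
    by (simp add: not_reflection_point_iff prv_add_mod nxt_add_mod Y_def \<open>0 < \<sigma>\<close>)
  moreover have "\<forall>t. 0 < t \<and> t < k \<longrightarrow> Y t \<noteq> x0"
    using off by (simp add: Y_def)
  ultimately have unique: "t1 = t2"
    if "t1 < k" "t2 < k"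
      and "leg_meets \<sigma> p ((s + t1) mod \<sigma>) x0" "leg_meets \<sigma> p ((s + t2) mod \<sigma>) x0"
    for t1 t2
    using path_without_turns_meets_line_once that meets_iff by blast
  obtain t0 where "t0 < k" "leg_meets \<sigma> p ((s + t0) mod \<sigma>) x0"
    using meets by blast
  then have "{j \<in> {(s + t) mod \<sigma> | t. t < k}. leg_meets \<sigma> p j x0} = {(s + t0) mod \<sigma>}"
    using unique by blast
  then show ?thesis
    by (simp add: shadow_def)
qed

theorem lemma3:
  fixes n \<sigma> :: nat and xs ys :: "nat \<Rightarrow> real" and p :: "nat \<Rightarrow> real \<times> real"
  assumes distinct_x: "inj_on xs {..<n}"
    and opt: "is_opt_tour n xs ys \<sigma> p"
    and novert: "no_vertical_legs n xs ys \<sigma> p"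
    and nocross: "not_self_crossing \<sigma> p"
  shows "(\<forall>x0 x1. x0 < x1 \<longrightarrow>
            (\<forall>j<\<sigma>. fst (p j) \<noteq> x0 \<and> fst (p j) \<noteq> x1) \<longrightarrow>
            (\<forall>j<\<sigma>. reflection_point \<sigma> p j \<longrightarrow> fst (p j) \<notin> {x0..x1}) \<longrightarrow>
            shadow \<sigma> p {..<\<sigma>} x0 = shadow \<sigma> p {..<\<sigma>} x1)
       \<and> (\<forall>s k x0. s < \<sigma> \<longrightarrow> 1 \<le> k \<longrightarrow> k \<le> \<sigma> \<longrightarrow>
            (\<forall>t. 0 < t \<and> t < k \<longrightarrow> \<not> reflection_point \<sigma> p ((s + t) mod \<sigma>)) \<longrightarrow>
            (\<exists>t<k. leg_meets \<sigma> p ((s + t) mod \<sigma>) x0) \<longrightarrow>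
            (\<forall>t. 0 < t \<and> t < k \<longrightarrow> fst (p ((s + t) mod \<sigma>)) \<noteq> x0) \<longrightarrow>
            shadow \<sigma> p {(s + t) mod \<sigma> | t. t < k} x0 = 1)"
proof -
  \<comment> \<open>Optimality is used only to get a nonempty tour.\<close>
  have "0 < \<sigma>"
    using opt by (simp add: is_opt_tour_def is_tour_def)
  then show ?thesis
    by (simp add: shadow_constant_between_reflection_points
        shadow_of_subpath_without_reflection_points)
qed

end
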